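(* Let $\omega\ge2$ and let $\Gamma$ be a finite simple graph on $n$ vertices that is $k$-regular and $\omega$-clique regular, whose smallest adjacency eigenvalue $\lambda_1$ has multiplicity $a_1$. Then $\lambda_1\ge\frac{-k}{\omega-1}$. If moreover $k<\omega(\omega-1)$, then $\lambda_1=\frac{-k}{\omega-1}$ and $a_1\ge n-\frac{nk}{\omega(\omega-1)}$.
   Context: A graph is $\omega$-clique regular if it has a nonempty edge set and every edge lies in exactly one clique of order $\omega$. *)

theory Defs
  imports "Jordan_Normal_Form.Char_Poly"
begin

text \<open>A finite simple graph on the vertex set {0..<n} is given by a symmetric,
irreflexive adjacency relation E (only its restriction to {0..<n} matters).\<close>

definition simple_graph :: "nat \<Rightarrow> (nat \<Rightarrow> nat \<Rightarrow> bool) \<Rightarrow> bool" where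
  "simple_graph n E \<longleftrightarrow> (\<forall>u<n. \<forall>v<n. E u v \<longleftrightarrow> E v u) \<and> (\<forall>v<n. \<not> E v v)"

definition k_regular :: "nat \<Rightarrow> (nat \<Rightarrow> nat \<Rightarrow> bool) \<Rightarrow> nat \<Rightarrow> bool" where
  "k_regular n E k \<longleftrightarrow> (\<forall>v<n. card {u. u < n \<and> E v u} = k)"

definition is_clique :: "nat \<Rightarrow> (nat \<Rightarrow> nat \<Rightarrow> bool) \<Rightarrow> nat set \<Rightarrow> bool" where
  "is_clique n E C \<longleftrightarrow> C \<subseteq> {0..<n} \<and> (\<forall>u\<in>C. \<forall>v\<in>C. u \<noteq> v \<longrightarrow> E u v)"

definition clique_regular :: "nat \<Rightarrow> (nat \<Rightarrow> nat \<Rightarrow> bool) \<Rightarrow> nat \<Rightarrow> bool" where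
  "clique_regular n E \<omega> \<longleftrightarrow>
     (\<exists>u<n. \<exists>v<n. E u v) \<and>
     (\<forall>u<n. \<forall>v<n. E u v \<longrightarrow>
        (\<exists>!C. is_clique n E C \<and> card C = \<omega> \<and> u \<in> C \<and> v \<in> C))"

definition adj_matrix :: "nat \<Rightarrow> (nat \<Rightarrow> nat \<Rightarrow> bool) \<Rightarrow> real mat" where
  "adj_matrix n E = mat n n (\<lambda>(i, j). if E i j then 1 else 0)"

text \<open>lambda is the smallest adjacency eigenvalue (eigenvalues of a real symmetric matrix are real).\<close>
definition smallest_eigenvalue :: "real mat \<Rightarrow> real \<Rightarrow> bool" where
  "smallest_eigenvalue A lam \<longleftrightarrow> eigenvalue A lam \<and> (\<forall>mu. eigenvalue A mu \<longrightarrow> lam \<le> mu)"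

definition eig_multiplicity :: "real mat \<Rightarrow> real \<Rightarrow> nat" where
  "eig_multiplicity A lam = order lam (char_poly A)"

end

theory Submission
  imports Defs "Jordan_Normal_Form.Jordan_Normal_Form_Existence" "Jordan_Normal_Form.Jordan_Normal_Form_Uniqueness"
begin

(* Let N be the incidence matrix between the omega-cliques and the vertices. Since every edge lies
   in exactly one omega-clique, the omega-cliques through a vertex partition its neighbourhood, so
   every vertex lies in d = k/(omega - 1) of them and N^T N = A + d I. Hence A + d I is positive
   semidefinite, which gives lambda_1 >= -d, and its kernel is ker N, of dimension at least n - c,
   where c = n d / omega is the number of omega-cliques. If k < omega (omega - 1) then d < omega,
   so c < n and -d is an eigenvalue whose geometric, hence algebraic, multiplicity is at least n - c. *)

definition cliques :: "nat \<Rightarrow> (nat \<Rightarrow> nat \<Rightarrow> bool) \<Rightarrow> nat \<Rightarrow> nat set set" where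
  "cliques n E w = {C. is_clique n E C \<and> card C = w}"

lemma cliques_subset: "C \<in> cliques n E w \<Longrightarrow> C \<subseteq> {0..<n}"
  by (simp add: cliques_def is_clique_def)

lemma finite_cliques: "finite (cliques n E w)"
  by (rule finite_subset[of _ "Pow {0..<n}"]) (auto dest: cliques_subset)

lemma card_cliques_containing_edge:
  assumes "clique_regular n E w" and "i < n" "j < n" "i \<noteq> j"
  shows "card {C \<in> cliques n E w. i \<in> C \<and> j \<in> C} = (if E i j then 1 else 0)"
proof (cases "E i j")
  case True
  then have "\<exists>!C. C \<in> cliques n E w \<and> i \<in> C \<and> j \<in> C"
    using assms unfolding clique_regular_def cliques_def by simp
  then obtain C where "C \<in> cliques n E w" "i \<in> C" "j \<in> C"
    and "\<And>C'. C' \<in> cliques n E w \<Longrightarrow> i \<in> C' \<Longrightarrow> j \<in> C' \<Longrightarrow> C' = C"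
    by blast
  then have "{C \<in> cliques n E w. i \<in> C \<and> j \<in> C} = {C}"
    by blast
  then show ?thesis using True by simp
next
  case False
  then have "{C \<in> cliques n E w. i \<in> C \<and> j \<in> C} = {}"
    using \<open>i \<noteq> j\<close> by (auto simp: cliques_def is_clique_def)
  then show ?thesis using False by (metis card.empty)
qed

lemma sum_card_containing_eq_sum_card:
  assumes "finite V" "finite S" "\<And>C. C \<in> S \<Longrightarrow> C \<subseteq> V"
  shows "(\<Sum>v\<in>V. card {C \<in> S. v \<in> C}) = (\<Sum>C\<in>S. card C)"
proof -
  have "(\<Sum>v\<in>V. card {C \<in> S. v \<in> C}) = (\<Sum>v\<in>V. \<Sum>C\<in>S. if v \<in> C then 1 else 0)"
    using assms(2) by (simp flip: sum.inter_filter)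
  also have "\<dots> = (\<Sum>C\<in>S. \<Sum>v\<in>V. if v \<in> C then 1 else 0)"
    by (rule sum.swap)
  also have "\<dots> = (\<Sum>C\<in>S. card C)"
  proof (rule sum.cong[OF refl])
    fix C assume "C \<in> S"
    then have "V \<inter> C = C" using assms(3) by blast
    then show "(\<Sum>v\<in>V. if v \<in> C then 1 else 0) = card C"
      using assms(1) by (simp flip: sum.inter_filter add: Collect_conj_eq)
  qed
  finally show ?thesis .
qed

lemma neighbourhood_eq_Union_cliques:
  assumes "simple_graph n E" "clique_regular n E w" "i < n"
  shows "{j. j < n \<and> E i j} = (\<Union>C\<in>{C \<in> cliques n E w. i \<in> C}. C - {i})"
proof
  show "{j. j < n \<and> E i j} \<subseteq> (\<Union>C\<in>{C \<in> cliques n E w. i \<in> C}. C - {i})"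
  proof
    fix j assume "j \<in> {j. j < n \<and> E i j}"
    then have "j < n" "E i j" "j \<noteq> i"
      using assms(1) by (auto simp: simple_graph_def)
    moreover obtain C where "is_clique n E C" "card C = w" "i \<in> C" "j \<in> C"
      using assms(2,3) \<open>j < n\<close> \<open>E i j\<close> unfolding clique_regular_def by blast
    ultimately show "j \<in> (\<Union>C\<in>{C \<in> cliques n E w. i \<in> C}. C - {i})"
      by (auto simp: cliques_def)
  qed
  show "(\<Union>C\<in>{C \<in> cliques n E w. i \<in> C}. C - {i}) \<subseteq> {j. j < n \<and> E i j}"
    by (auto simp: cliques_def is_clique_def)
qed

lemma card_cliques_containing_vertex:
  assumes "simple_graph n E" "k_regular n E k" "clique_regular n E w" "i < n"
  shows "card {C \<in> cliques n E w. i \<in> C} * (w - 1) = k"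
proof -
  let ?S = "{C \<in> cliques n E w. i \<in> C}"
  have finite: "finite C" if "C \<in> ?S" for C
    using that by (auto intro: finite_subset dest: cliques_subset)
  have disjoint: "(C - {i}) \<inter> (C' - {i}) = {}" if "C \<in> ?S" "C' \<in> ?S" "C \<noteq> C'" for C C'
  proof (rule ccontr)
    assume "(C - {i}) \<inter> (C' - {i}) \<noteq> {}"
    then obtain j where "j \<in> C" "j \<in> C'" "j \<noteq> i" by blast
    moreover from this have "j < n" "E i j"
      using that(1) by (auto simp: cliques_def is_clique_def)
    ultimately have "C = C'"
      using that(1,2) assms(3,4) unfolding clique_regular_def cliques_def by blast
    then show False using that(3) by contradiction
  qed
  have "k = card {j. j < n \<and> E i j}"
    using assms(2,4) by (simp add: k_regular_def)
  also have "\<dots> = (\<Sum>C\<in>?S. card (C - {i}))"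
    unfolding neighbourhood_eq_Union_cliques[OF assms(1,3,4)]
    by (rule card_UN_disjoint) (simp_all add: finite_cliques finite disjoint)
  also have "\<dots> = (\<Sum>C\<in>?S. w - 1)"
    using finite by (intro sum.cong) (auto simp: cliques_def)
  finally show ?thesis by simp
qed

lemma card_cliques_mult_eq:
  assumes "\<And>i. i < n \<Longrightarrow> card {C \<in> cliques n E w. i \<in> C} = d"
  shows "card (cliques n E w) * w = n * d"
proof -
  have "n * d = (\<Sum>i\<in>{0..<n}. card {C \<in> cliques n E w. i \<in> C})"
    using assms by simp
  also have "\<dots> = (\<Sum>C\<in>cliques n E w. card C)"
    by (rule sum_card_containing_eq_sum_card) (simp_all add: finite_cliques cliques_subset)
  also have "\<dots> = card (cliques n E w) * w"
    by (simp add: cliques_def)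
  finally show ?thesis by simp
qed

definition incidence_mat :: "nat \<Rightarrow> nat set list \<Rightarrow> 'a :: comm_ring_1 mat" where
  "incidence_mat n Cs = mat (length Cs) n (\<lambda>(r, i). if i \<in> Cs ! r then 1 else 0)"

lemma incidence_mat_carrier [simp]: "incidence_mat n Cs \<in> carrier_mat (length Cs) n"
  by (simp add: incidence_mat_def)

lemma gram_incidence_mat:
  assumes "distinct Cs"
  shows "transpose_mat (incidence_mat n Cs) * incidence_mat n Cs
    = mat n n (\<lambda>(i, j). of_nat (card {C \<in> set Cs. i \<in> C \<and> j \<in> C}))" (is "?NN = ?G")
proof (rule eq_matI)
  fix i j assume "i < dim_row ?G" "j < dim_col ?G"
  then have "i < n" "j < n" by simp_all
  let ?f = "\<lambda>C. if i \<in> C \<and> j \<in> C then 1 else 0 :: 'a"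
  have "?NN $$ (i, j) = (\<Sum>r = 0..<length Cs. ?f (Cs ! r))"
    using \<open>i < n\<close> \<open>j < n\<close> by (auto simp: incidence_mat_def scalar_prod_def intro!: sum.cong)
  also have "\<dots> = (\<Sum>C\<in>set Cs. ?f C)"
    using assms by (simp add: sum_list_sum_nth sum.distinct_set_conv_list)
  also have "\<dots> = of_nat (card {C \<in> set Cs. i \<in> C \<and> j \<in> C})"
    by (simp flip: sum.inter_filter)
  also have "\<dots> = ?G $$ (i, j)"
    using \<open>i < n\<close> \<open>j < n\<close> by simp
  finally show "?NN $$ (i, j) = ?G $$ (i, j)" .
qed (simp_all add: incidence_mat_def)

lemma conjugate_mult_mat_vec:
  fixes N :: "'a :: conjugatable_field mat"
  assumes N: "N \<in> carrier_mat m n" and v: "v \<in> carrier_vec n"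
    and self_conjugate: "\<And>i j. i < m \<Longrightarrow> j < n \<Longrightarrow> conjugate (N $$ (i, j)) = N $$ (i, j)"
  shows "conjugate (N *\<^sub>v v) = N *\<^sub>v conjugate v"
proof (rule eq_vecI)
  fix i assume "i < dim_vec (N *\<^sub>v conjugate v)"
  then have i: "i < m" using N by simp
  have "conjugate (row N i) = row N i"
    using N i self_conjugate by (intro eq_vecI) auto
  then show "conjugate (N *\<^sub>v v) $ i = (N *\<^sub>v conjugate v) $ i"
    using N v i by (simp add: conjugate_sprod_vec[of _ n])
qed (use N in simp)

lemma gram_cscalar_prod:
  fixes N :: "'a :: conjugatable_field mat"
  assumes N: "N \<in> carrier_mat m n" and v: "v \<in> carrier_vec n"
    and self_conjugate: "\<And>i j. i < m \<Longrightarrow> j < n \<Longrightarrow> conjugate (N $$ (i, j)) = N $$ (i, j)"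
  shows "(transpose_mat N * N *\<^sub>v v) \<bullet>c v = (N *\<^sub>v v) \<bullet>c (N *\<^sub>v v)"
proof -
  have "(transpose_mat N * N *\<^sub>v v) \<bullet>c v = (transpose_mat N *\<^sub>v (N *\<^sub>v v)) \<bullet> conjugate v"
    using N v by simp
  also have "\<dots> = (N *\<^sub>v v) \<bullet> (N *\<^sub>v conjugate v)"
    using N v by (intro transpose_vec_mult_scalar) auto
  also have "\<dots> = (N *\<^sub>v v) \<bullet>c (N *\<^sub>v v)"
    by (simp add: conjugate_mult_mat_vec[OF N v self_conjugate])
  finally show ?thesis .
qed

lemma mat_kernel_gram:
  fixes N :: "'a :: conjugatable_ordered_field mat"
  assumes N: "N \<in> carrier_mat m n"
    and self_conjugate: "\<And>i j. i < m \<Longrightarrow> j < n \<Longrightarrow> conjugate (N $$ (i, j)) = N $$ (i, j)"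
  shows "mat_kernel (transpose_mat N * N) = mat_kernel N"
proof
  show "mat_kernel N \<subseteq> mat_kernel (transpose_mat N * N)"
    using N by (intro mat_kernel_mult_subset) auto
  show "mat_kernel (transpose_mat N * N) \<subseteq> mat_kernel N"
  proof
    fix v assume "v \<in> mat_kernel (transpose_mat N * N)"
    then have v: "v \<in> carrier_vec n" and "transpose_mat N * N *\<^sub>v v = 0\<^sub>v n"
      using N by (auto simp: mat_kernel_def)
    then have "(N *\<^sub>v v) \<bullet>c (N *\<^sub>v v) = 0"
      using gram_cscalar_prod[OF N v self_conjugate] by simp
    then have "N *\<^sub>v v = 0\<^sub>v m"
      using N v by (simp add: conjugate_square_eq_0_vec[of _ m])
    then show "v \<in> mat_kernel N"
      using N v by (intro mat_kernelI)
  qed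
qed

lemma kernel_dim_gram:
  fixes N :: "'a :: conjugatable_ordered_field mat"
  assumes N: "N \<in> carrier_mat m n"
    and self_conjugate: "\<And>i j. i < m \<Longrightarrow> j < n \<Longrightarrow> conjugate (N $$ (i, j)) = N $$ (i, j)"
  shows "kernel_dim (transpose_mat N * N) = kernel_dim N"
  using N by (simp add: kernel_dim_def mat_kernel_gram[OF assms])

lemma gram_eigenvalue_nonneg:
  fixes N :: "real mat"
  assumes N: "N \<in> carrier_mat m n" and "eigenvalue (transpose_mat N * N) \<mu>"
  shows "0 \<le> \<mu>"
proof -
  obtain v where v: "v \<in> carrier_vec n" "v \<noteq> 0\<^sub>v n" and "transpose_mat N * N *\<^sub>v v = \<mu> \<cdot>\<^sub>v v"
    using assms unfolding eigenvalue_def eigenvector_def by auto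
  then have "\<mu> * (v \<bullet> v) = (N *\<^sub>v v) \<bullet> (N *\<^sub>v v)"
    using gram_cscalar_prod[OF N v(1)] v(1) by simp
  moreover have "0 \<le> (N *\<^sub>v v) \<bullet> (N *\<^sub>v v)" "0 < v \<bullet> v"
    using conjugate_square_ge_0_vec[of "N *\<^sub>v v"] conjugate_square_greater_0_vec[OF v(1)] v by simp_all
  ultimately show ?thesis by (metis mult_neg_pos not_le)
qed

lemma eigenvalue_add_scalar_one:
  fixes A :: "'a :: comm_ring_1 mat"
  assumes A: "A \<in> carrier_mat n n" and "eigenvalue A \<mu>"
  shows "eigenvalue (A + c \<cdot>\<^sub>m 1\<^sub>m n) (\<mu> + c)"
proof -
  obtain v where v: "v \<in> carrier_vec n" "v \<noteq> 0\<^sub>v n" and "A *\<^sub>v v = \<mu> \<cdot>\<^sub>v v"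
    using assms unfolding eigenvalue_def eigenvector_def by auto
  moreover have "(c \<cdot>\<^sub>m 1\<^sub>m n) *\<^sub>v v = c \<cdot>\<^sub>v v"
    using v by (intro eq_vecI) auto
  ultimately have "(A + c \<cdot>\<^sub>m 1\<^sub>m n) *\<^sub>v v = (\<mu> + c) \<cdot>\<^sub>v v"
    using A by (simp add: add_mult_distrib_mat_vec[of _ n n] add_smult_distrib_vec)
  then show ?thesis
    using A v unfolding eigenvalue_def eigenvector_def by auto
qed

lemma kernel_dim_ge:
  fixes N :: "'a :: field mat"
  assumes N: "N \<in> carrier_mat m n"
  shows "n - m \<le> kernel_dim N"
proof -
  define G where "G = gauss_jordan_single N"
  have G: "G \<in> carrier_mat m n" and "row_echelon_form G"
    using gauss_jordan_single(2,3)[OF N G_def[symmetric]] by auto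
  have "length (pivot_positions G) = card {i. i < m \<and> row G i \<noteq> 0\<^sub>v n}"
    by (rule find_base_vectors(5)[OF \<open>row_echelon_form G\<close> G])
  also have "\<dots> \<le> card {..<m}"
    by (rule card_mono) auto
  finally show ?thesis
    using N by (simp add: kernel_dim_code G_def)
qed

lemma kernel_dim_char_matrix_le_order:
  assumes "jordan_nf A n_as"
  shows "kernel_dim (char_matrix A ev) \<le> Polynomial.order ev (char_poly A)"
proof -
  have "kernel_dim (char_matrix A ev) = dim_gen_eigenspace A ev 1"
    by (simp add: dim_gen_eigenspace_def)
  also have "\<dots> = (\<Sum>k \<leftarrow> map fst [(k, e) \<leftarrow> n_as. e = ev]. min 1 k)"
    by (rule dim_gen_eigenspace[OF assms])
  also have "\<dots> \<le> sum_list (map fst (filter (\<lambda>ke. snd ke = ev) n_as))"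
    by (induction n_as) auto
  also have "\<dots> = Polynomial.order ev (char_poly A)"
    by (rule jordan_nf_order[OF assms, symmetric])
  finally show ?thesis .
qed

interpretation of_real_poly: map_poly_inj_idom_divide_hom "of_real :: real \<Rightarrow> complex" ..

lemma gram_clique_incidence_mat:
  assumes "clique_regular n E w" "distinct Cs" "set Cs = cliques n E w"
    and degree: "\<And>i. i < n \<Longrightarrow> card {C \<in> cliques n E w. i \<in> C} = d"
  shows "transpose_mat (incidence_mat n Cs) * incidence_mat n Cs
    = (mat n n (\<lambda>(i, j). if i = j then of_nat d else if E i j then 1 else 0) :: 'a :: comm_ring_1 mat)"
  unfolding gram_incidence_mat[OF assms(2)] assms(3)
  using degree card_cliques_containing_edge[OF assms(1)] by (intro eq_matI) auto

lemma adj_eigenvalue_ge: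
  assumes "simple_graph n E" "clique_regular n E w"
    and degree: "\<And>i. i < n \<Longrightarrow> card {C \<in> cliques n E w. i \<in> C} = d"
    and "eigenvalue (adj_matrix n E) \<mu>"
  shows "- real d \<le> \<mu>"
proof -
  obtain Cs where Cs: "distinct Cs" "set Cs = cliques n E w"
    using finite_distinct_list[OF finite_cliques] by metis
  have "transpose_mat (incidence_mat n Cs) * incidence_mat n Cs
      = mat n n (\<lambda>(i, j). if i = j then real d else if E i j then 1 else 0)"
    by (rule gram_clique_incidence_mat[OF assms(2) Cs degree])
  also have "\<dots> = adj_matrix n E + real d \<cdot>\<^sub>m 1\<^sub>m n"
    using assms(1) by (intro eq_matI) (auto simp: adj_matrix_def simple_graph_def)
  finally have "adj_matrix n E + real d \<cdot>\<^sub>m 1\<^sub>m n = transpose_mat (incidence_mat n Cs) * incidence_mat n Cs"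
    by (rule sym)
  moreover have "eigenvalue (adj_matrix n E + real d \<cdot>\<^sub>m 1\<^sub>m n) (\<mu> + real d)"
    using assms(4) by (intro eigenvalue_add_scalar_one) (simp_all add: adj_matrix_def)
  ultimately show ?thesis
    using gram_eigenvalue_nonneg[OF incidence_mat_carrier] by fastforce
qed

lemma order_char_poly_adj_ge:
  assumes "simple_graph n E" "clique_regular n E w"
    and degree: "\<And>i. i < n \<Longrightarrow> card {C \<in> cliques n E w. i \<in> C} = d"
  shows "n - card (cliques n E w) \<le> Polynomial.order (- real d) (char_poly (adj_matrix n E))"
proof -
  obtain Cs where Cs: "distinct Cs" "set Cs = cliques n E w"
    using finite_distinct_list[OF finite_cliques] by metis
  \<comment> \<open>Work over \<complex>, where a Jordan normal form exists and bounds the geometric multiplicity by the algebraic one.\<close>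
  let ?N = "incidence_mat n Cs :: complex mat"
  let ?A = "map_mat complex_of_real (adj_matrix n E)"
  have "char_matrix ?A (- of_nat d) = mat n n (\<lambda>(i, j). if i = j then of_nat d else if E i j then 1 else 0)"
    using assms(1) by (intro eq_matI) (auto simp: char_matrix_def adj_matrix_def simple_graph_def)
  also have "\<dots> = transpose_mat ?N * ?N"
    by (rule gram_clique_incidence_mat[OF assms(2) Cs degree, symmetric])
  also have "kernel_dim \<dots> = kernel_dim ?N"
    by (rule kernel_dim_gram[OF incidence_mat_carrier]) (simp add: incidence_mat_def)
  finally have "n - card (cliques n E w) \<le> kernel_dim (char_matrix ?A (- of_nat d))"
    using kernel_dim_ge[OF incidence_mat_carrier, of n Cs] distinct_card[OF Cs(1), unfolded Cs(2)] by simp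
  moreover have "?A \<in> carrier_mat n n"
    by (simp add: adj_matrix_def)
  then obtain n_as where "jordan_nf ?A n_as"
    using char_poly_factorized jordan_nf_iff_linear_factorization by blast
  ultimately have "n - card (cliques n E w) \<le> Polynomial.order (- of_nat d) (char_poly ?A)"
    using kernel_dim_char_matrix_le_order le_trans by blast
  also have "char_poly ?A = map_poly complex_of_real (char_poly (adj_matrix n E))"
    by (rule of_real_hom.char_poly_hom[of _ n]) (simp add: adj_matrix_def)
  also have "Polynomial.order (- of_nat d) \<dots> = Polynomial.order (- real d) (char_poly (adj_matrix n E))"
    using of_real_poly.order_hom[of "- real d"] by simp
  finally show ?thesis .
qed

lemma clique_regular_nonempty:
  assumes "clique_regular n E w"
  shows "0 < n"
  using conjunct1[OF assms[unfolded clique_regular_def]] by auto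

lemma uniform_clique_degree:
  assumes "simple_graph n E" "k_regular n E k" "clique_regular n E w" "w \<ge> 2"
  obtains d where "\<And>i. i < n \<Longrightarrow> card {C \<in> cliques n E w. i \<in> C} = d" and "d * (w - 1) = k"
proof -
  obtain u where "u < n"
    using clique_regular_nonempty[OF assms(3)] by blast
  define d where "d = card {C \<in> cliques n E w. u \<in> C}"
  have "d * (w - 1) = k"
    unfolding d_def by (rule card_cliques_containing_vertex[OF assms(1-3) \<open>u < n\<close>])
  moreover have "card {C \<in> cliques n E w. i \<in> C} = d" if "i < n" for i
  proof -
    have "card {C \<in> cliques n E w. i \<in> C} * (w - 1) = d * (w - 1)"
      using card_cliques_containing_vertex[OF assms(1-3) that] \<open>d * (w - 1) = k\<close> by simp
    then show ?thesis
      using assms(4) by simp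
  qed
  ultimately show thesis
    using that by blast
qed

lemma smallest_adj_eigenvalue_eq:
  assumes "simple_graph n E" "clique_regular n E w"
    and degree: "\<And>i. i < n \<Longrightarrow> card {C \<in> cliques n E w. i \<in> C} = d"
    and "d < w" and "smallest_eigenvalue (adj_matrix n E) lam"
  shows "lam = - real d"
    and "real n - real (card (cliques n E w)) \<le> real (eig_multiplicity (adj_matrix n E) lam)"
proof -
  have "0 < n"
    by (rule clique_regular_nonempty[OF assms(2)])
  then have "card (cliques n E w) * w < n * w"
    using card_cliques_mult_eq[OF degree] \<open>d < w\<close> by simp
  then have "card (cliques n E w) < n"
    by simp
  then have "0 < Polynomial.order (- real d) (char_poly (adj_matrix n E))"
    using order_char_poly_adj_ge[OF assms(1,2) degree] by linarith
  then have "eigenvalue (adj_matrix n E) (- real d)"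
    by (simp add: eigenvalue_root_char_poly[of _ n] adj_matrix_def order_root)
  then show "lam = - real d"
    using adj_eigenvalue_ge[OF assms(1,2) degree] assms(5)
    by (force simp: smallest_eigenvalue_def)
  then show "real n - real (card (cliques n E w)) \<le> real (eig_multiplicity (adj_matrix n E) lam)"
    using order_char_poly_adj_ge[OF assms(1,2) degree] \<open>card (cliques n E w) < n\<close>
    by (simp add: eig_multiplicity_def)
qed

theorem corollary3:
  fixes n k \<omega> :: nat and E :: "nat \<Rightarrow> nat \<Rightarrow> bool" and lam1 :: real and a1 :: nat
  assumes "\<omega> \<ge> 2"
    and "simple_graph n E"
    and "k_regular n E k"
    and "clique_regular n E \<omega>"
    and "smallest_eigenvalue (adj_matrix n E) lam1"
    and "a1 = eig_multiplicity (adj_matrix n E) lam1"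
  shows "lam1 \<ge> - real k / (real \<omega> - 1) \<and>
         (k < \<omega> * (\<omega> - 1) \<longrightarrow>
           lam1 = - real k / (real \<omega> - 1) \<and>
           real a1 \<ge> real n - real n * real k / (real \<omega> * (real \<omega> - 1)))"
proof -
  obtain d where degree: "\<And>i. i < n \<Longrightarrow> card {C \<in> cliques n E \<omega>. i \<in> C} = d"
    and "d * (\<omega> - 1) = k"
    using uniform_clique_degree[OF assms(2-4,1)] by blast
  then have d: "real d = real k / (real \<omega> - 1)"
    using assms(1) by (auto simp: field_simps)
  have "real (card (cliques n E \<omega>)) * real \<omega> = real n * real d"
    using card_cliques_mult_eq[OF degree] by (metis of_nat_mult)
  then have "real (card (cliques n E \<omega>)) = real n * real k / (real \<omega> * (real \<omega> - 1))"
    using assms(1) by (simp add: d field_simps)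
  moreover have "- real d \<le> lam1"
    using adj_eigenvalue_ge[OF assms(2,4) degree] assms(5) by (simp add: smallest_eigenvalue_def)
  moreover have "d < \<omega>" if "k < \<omega> * (\<omega> - 1)"
    using that \<open>d * (\<omega> - 1) = k\<close> by (metis mult_less_cancel2)
  ultimately show ?thesis
    using smallest_adj_eigenvalue_eq[OF assms(2,4) degree _ assms(5)] d assms(6) by auto
qed

end
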